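(* Let $H$ be a Heyting algebra, let $I$ be a finite set and let $\Pi=\{(a_i,b_i)\mid i\in I\}$ be a family of pairs of elements of $H$. Define $\phi_\Pi:H\to H$ by $\phi_\Pi(x)=\bigvee_{i\in I}((x\to a_i)\to b_i)$. Then $\phi_\Pi$ converges to its least fixed point in $3$ steps, i.e. $\phi_\Pi^4(\bot)=\phi_\Pi^3(\bot)$, so $\phi_\Pi^3(\bot)$ is the least fixed point of $\phi_\Pi$.
   Context: $\phi_\Pi^n$ denotes the $n$-fold composite of $\phi_\Pi$ with itself; $\bot$ is the least element of $H$. *)

theory Defs
  imports Main
begin

class heyting_algebra = bounded_lattice +
  fixes himp :: "'a \<Rightarrow> 'a \<Rightarrow> 'a"
  assumes himp_residuation: "inf c a \<le> b \<longleftrightarrow> c \<le> himp a b"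

definition fin_join :: "'i set \<Rightarrow> ('i \<Rightarrow> 'a::bounded_semilattice_sup_bot) \<Rightarrow> 'a" where
  "fin_join I f = Finite_Set.fold (\<lambda>i acc. sup (f i) acc) bot I"

definition phi :: "'i set \<Rightarrow> ('i \<Rightarrow> 'a::heyting_algebra) \<Rightarrow> ('i \<Rightarrow> 'a) \<Rightarrow> 'a \<Rightarrow> 'a" where
  "phi I a b x = fin_join I (\<lambda>i. himp (himp x (a i)) (b i))"

end

theory Submission
  imports Defs
begin

text \<open>Write \<open>\<psi>\<^sub>i(x) = (x \<rightarrow> a\<^sub>i) \<rightarrow> b\<^sub>i\<close>, so \<open>\<phi> = \<Squnion>\<^sub>i \<psi>\<^sub>i\<close> is monotone and every
  \<open>b\<^sub>i\<close> lies below every value of \<open>\<phi>\<close>. Take \<open>B = \<phi>(\<bottom>)\<close>, \<open>x\<^sub>2 = \<phi>(B)\<close>, \<open>x\<^sub>3 = \<phi>(x\<^sub>2)\<close>.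
  To see \<open>\<psi>\<^sub>i(x\<^sub>3) \<le> x\<^sub>3\<close> it suffices that \<open>u = \<psi>\<^sub>i(x\<^sub>3) \<sqinter> (x\<^sub>2 \<rightarrow> a\<^sub>i)\<close> is below \<open>b\<^sub>i\<close>,
  since then \<open>\<psi>\<^sub>i(x\<^sub>3) \<le> \<psi>\<^sub>i(x\<^sub>2) \<le> x\<^sub>3\<close>. Now \<open>u \<sqinter> x\<^sub>2 \<le> b\<^sub>i \<le> B\<close>, and this bound lets one
  absorb each \<open>\<psi>\<^sub>k(x\<^sub>2)\<close> into \<open>x\<^sub>2\<close> after meeting with \<open>u\<close>, using \<open>\<psi>\<^sub>k(B) \<le> x\<^sub>2\<close>.
  Hence \<open>x\<^sub>3 \<sqinter> u \<le> x\<^sub>2 \<sqinter> (x\<^sub>2 \<rightarrow> a\<^sub>i) \<le> a\<^sub>i\<close>, i.e. \<open>u \<le> x\<^sub>3 \<rightarrow> a\<^sub>i\<close>, and so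
  \<open>u \<le> \<psi>\<^sub>i(x\<^sub>3) \<sqinter> (x\<^sub>3 \<rightarrow> a\<^sub>i) \<le> b\<^sub>i\<close>. Thus \<open>x\<^sub>3\<close> is a prefixed point reached by
  Kleene iteration from \<open>\<bottom>\<close>, hence the least fixed point.\<close>

lemma fin_join_insert:
  assumes "finite I" "i \<notin> I"
  shows "fin_join (insert i I) f = sup (f i) (fin_join I f)"
proof -
  have "comp_fun_commute_on UNIV (\<lambda>i acc. sup (f i) acc)"
    by unfold_locales (auto simp: fun_eq_iff sup_left_commute)
  from comp_fun_commute_on.fold_insert[OF this] show ?thesis
    unfolding fin_join_def using assms by auto
qed

lemma fin_join_le_iff:
  assumes "finite I"
  shows "fin_join I f \<le> y \<longleftrightarrow> (\<forall>i\<in>I. f i \<le> y)"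
  using assms by (induction I rule: finite_induct) (simp_all add: fin_join_insert, simp add: fin_join_def)

lemma fin_join_upper:
  assumes "finite I" "i \<in> I"
  shows "f i \<le> fin_join I f"
  using fin_join_le_iff[OF assms(1)] assms(2) by blast

context heyting_algebra
begin

lemma le_himp_iff: "c \<le> himp a b \<longleftrightarrow> inf c a \<le> b"
  using himp_residuation by blast

lemma inf_himp_le: "inf x (himp x y) \<le> y"
  using himp_residuation[of "himp x y" x y] by (simp add: inf_commute)

lemma himp_inf_le: "inf (himp x y) x \<le> y"
  using inf_himp_le[of x y] by (simp add: inf_commute)

lemma le_himp: "b \<le> himp x b"
  unfolding le_himp_iff by simp

lemma himp_antimono: "x \<le> y \<Longrightarrow> himp y a \<le> himp x a"
  unfolding le_himp_iff by (rule order_trans[OF inf_mono[OF order.refl] himp_inf_le])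

lemma himp_himp_inf_le:
  assumes "inf u x \<le> B" and "himp (himp B a) b \<le> x"
  shows "inf (himp (himp x a) b) u \<le> x"
proof -
  let ?c = "himp B a"
  have "inf (inf u ?c) x \<le> inf u x"
    by (auto intro: le_infI1)
  then have "inf (inf u ?c) x \<le> B"
    using assms(1) by (rule order_trans)
  moreover have "inf (inf u ?c) x \<le> ?c"
    by (rule order_trans[OF inf_le1 inf_le2])
  ultimately have "inf (inf u ?c) x \<le> inf B ?c"
    by (rule le_infI)
  also have "\<dots> \<le> a" by (rule inf_himp_le)
  finally have "inf u ?c \<le> himp x a" unfolding le_himp_iff .
  then have "inf (inf (himp (himp x a) b) u) ?c \<le> inf (himp (himp x a) b) (himp x a)"
    by (auto intro: le_infI1 le_infI2 simp: inf_assoc)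
  also have "\<dots> \<le> b" by (rule himp_inf_le)
  finally have "inf (himp (himp x a) b) u \<le> himp ?c b" unfolding le_himp_iff .
  also have "\<dots> \<le> x" by (rule assms(2))
  finally show ?thesis .
qed

end

lemma mono_phi:
  assumes "finite I"
  shows "mono (phi I a b)"
  by (rule monoI) (auto simp: phi_def fin_join_le_iff[OF assms]
      intro!: order_trans[OF _ fin_join_upper[OF assms]] himp_antimono)

lemma phi_le_iff:
  assumes "finite I"
  shows "phi I a b x \<le> y \<longleftrightarrow> (\<forall>i\<in>I. himp (himp x (a i)) (b i) \<le> y)"
  unfolding phi_def using assms by (rule fin_join_le_iff)

lemma phi_upper:
  assumes "finite I" "i \<in> I"
  shows "himp (himp x (a i)) (b i) \<le> phi I a b x"
  unfolding phi_def using assms by (rule fin_join_upper)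

lemma le_phi:
  assumes "finite I" "i \<in> I"
  shows "b i \<le> phi I a b x"
  using le_himp phi_upper[OF assms] by (rule order_trans)

lemma phi_phi_phi_le:
  fixes a b :: "'i \<Rightarrow> 'h::heyting_algebra"
  assumes fin: "finite I" and B: "\<forall>i\<in>I. b i \<le> B"
  shows "phi I a b (phi I a b (phi I a b B)) \<le> phi I a b (phi I a b B)"
proof -
  let ?x2 = "phi I a b B" and ?x3 = "phi I a b (phi I a b B)"
  have "himp (himp ?x3 (a i)) (b i) \<le> ?x3" if i: "i \<in> I" for i
  proof -
    let ?h = "himp (himp ?x3 (a i)) (b i)" and ?d = "himp ?x2 (a i)"
    let ?u = "inf ?h ?d"
    have d_x2: "inf ?d ?x2 \<le> a i" by (rule himp_inf_le)
    have h_x3: "inf ?h (himp ?x3 (a i)) \<le> b i" by (rule himp_inf_le)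
    have "inf ?u ?x2 \<le> inf ?h (himp ?x3 (a i))"
      using order_trans[OF d_x2 le_himp] by (auto simp: inf_assoc intro: le_infI2)
    then have u_x2: "inf ?u ?x2 \<le> B"
      using h_x3 B i by (meson order_trans)
    have "inf (himp (himp ?x2 (a k)) (b k)) ?u \<le> a i" if k: "k \<in> I" for k
    proof -
      have "inf (himp (himp ?x2 (a k)) (b k)) ?u \<le> ?x2"
        using u_x2 phi_upper[OF fin k] by (rule himp_himp_inf_le)
      then have "inf (himp (himp ?x2 (a k)) (b k)) ?u \<le> inf ?d ?x2"
        by (auto intro: le_infI2)
      then show ?thesis using d_x2 by (rule order_trans)
    qed
    then have "?x3 \<le> himp ?u (a i)"
      unfolding phi_le_iff[OF fin] by (simp add: le_himp_iff)
    then have "?u \<le> himp ?x3 (a i)"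
      by (metis le_himp_iff inf_commute)
    then have "?u \<le> b i"
      using h_x3 by (meson inf_le1 le_inf_iff order_trans)
    then have "?h \<le> himp ?d (b i)" by (simp add: le_himp_iff)
    also have "\<dots> \<le> ?x3" by (rule phi_upper[OF fin i])
    finally show ?thesis .
  qed
  then show ?thesis unfolding phi_le_iff[OF fin] by blast
qed

theorem mainTheorem2:
  fixes I :: "'i set" and a b :: "'i \<Rightarrow> 'h::heyting_algebra"
  assumes "finite I"
  shows "(phi I a b ^^ 4) bot = (phi I a b ^^ 3) bot
    \<and> phi I a b ((phi I a b ^^ 3) bot) = (phi I a b ^^ 3) bot
    \<and> (\<forall>y. phi I a b y = y \<longrightarrow> (phi I a b ^^ 3) bot \<le> y)"
proof -
  let ?f = "phi I a b"
  have mono: "mono ?f" using assms by (rule mono_phi)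
  have "\<forall>i\<in>I. b i \<le> ?f bot" using le_phi[OF assms] by blast
  then have "(?f ^^ 4) bot \<le> (?f ^^ 3) bot"
    using phi_phi_phi_le[OF assms] by (simp add: numeral_eq_Suc)
  moreover have "(?f ^^ 3) bot \<le> (?f ^^ 4) bot"
    using mono by (rule funpow_decreasing[rotated]) simp
  ultimately have fixpoint: "(?f ^^ 4) bot = (?f ^^ 3) bot" by (rule order.antisym)
  moreover have "?f ((?f ^^ 3) bot) = (?f ^^ 3) bot"
    using fixpoint by (simp add: numeral_eq_Suc)
  moreover have "(?f ^^ 3) bot \<le> y" if "?f y = y" for y
    using mono by (rule Kleene_iter_lpfp) (simp add: that)
  ultimately show ?thesis by blast
qed

end
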